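(* Let $\tilde{\Phi}:\mathbb{R}_{++}^{n\times m}\to\mathbb{R}$ be a differentiable convex function which is positively 1-homogeneous ($\tilde{\Phi}(tA)=t\tilde{\Phi}(A)$ for all $t>0$, $A\in\mathbb{R}_{++}^{n\times m}$) and strictly convex on $\mathcal{P}_{nm-1}$, and suppose that its gradient $S:\mathbb{R}_{++}^{n\times m}\to\mathbb{R}^{n\times m}$, $S^{ij}(A)=\partial\tilde{\Phi}/\partial A_{ij}(A)$, restricted to $\mathcal{P}_{nm-1}$ and composed with the quotient map, induces a bijection $\mathcal{P}_{nm-1}\to\mathbb{R}^{n\times m}/\langle 1_{nm}\rangle$. Let $\Phi$ be the restriction of $\tilde{\Phi}$ to $\mathcal{P}_{nm-1}$. Then for each $p\in\mathcal{P}_{n-1}$, $q\in\mathcal{P}_{m-1}$, the problem of minimizing $\Phi(P)$ over $P\in\Pi(p,q)$ has a unique solution $P^*(p,q)\in\Pi(p,q)$, and there exists $(\alpha^*,\beta^* )\in\mathbb{R}^n\times\mathbb{R}^m$ with \[ S^{ij}(P^*(p,q))=(\alpha^* )^i+(\beta^* )^j,\qquad 1\le i\le n,\ 1\le j\le m. \]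
   Context: $\mathbb{R}_{++}^{n\times m}$ denotes the set of real $n\times m$ matrices with all entries strictly positive. $\mathcal{P}_{n-1}=\{p\in\mathbb{R}^n:\sum_i p_i=1,\ p_i>0\}$, similarly $\mathcal{P}_{m-1}$, and $\mathcal{P}_{nm-1}=\{P\in\mathbb{R}_{++}^{n\times m}:\sum_{i,j}P_{ij}=1\}$. $\Pi(p,q)=\{P\in\mathcal{P}_{nm-1}:\sum_j P_{ij}=p_i\ \forall i,\ \sum_i P_{ij}=q_j\ \forall j\}$. $1_{nm}$ is the $n\times m$ matrix with all entries equal to $1$, and $\mathbb{R}^{n\times m}/\langle 1_{nm}\rangle$ is the quotient vector space by the relation $u\sim v\iff u-v=c\,1_{nm}$ for some $c\in\mathbb{R}$. *)

theory Defs
  imports "HOL-Analysis.Analysis"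
begin

text \<open>Matrices in R^{n x m} are rendered as real^'m^'n (row index i::'n, column index j::'m).\<close>

definition pos_mats :: "(real^'m^'n) set" where
  "pos_mats = {A. \<forall>i j. A $ i $ j > 0}"

definition simplex_vec :: "(real^'n) set" where
  "simplex_vec = {p. (\<forall>i. p $ i > 0) \<and> (\<Sum>i\<in>UNIV. p $ i) = 1}"

definition simplex_mat :: "(real^'m^'n) set" where
  "simplex_mat = {P \<in> pos_mats. (\<Sum>i\<in>UNIV. \<Sum>j\<in>UNIV. P $ i $ j) = 1}"

definition couplings :: "real^'n \<Rightarrow> real^'m \<Rightarrow> (real^'m^'n) set" where
  "couplings p q = {P \<in> simplex_mat.
     (\<forall>i. (\<Sum>j\<in>UNIV. P $ i $ j) = p $ i) \<and> (\<forall>j. (\<Sum>i\<in>UNIV. P $ i $ j) = q $ j)}"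

definition ones_mat :: "real^'m^'n" where
  "ones_mat = (\<chi> i j. 1)"

text \<open>Equivalence class of B in the quotient R^{n x m} / <1_{nm}>.\<close>
definition quot_class :: "real^'m^'n \<Rightarrow> (real^'m^'n) set" where
  "quot_class B = {B + c *\<^sub>R ones_mat | c. True}"

definition strict_convex_on :: "'a::real_vector set \<Rightarrow> ('a \<Rightarrow> real) \<Rightarrow> bool" where
  "strict_convex_on S f \<longleftrightarrow> convex S \<and>
    (\<forall>x\<in>S. \<forall>y\<in>S. \<forall>t. x \<noteq> y \<and> 0 < t \<and> t < 1 \<longrightarrow>
       f ((1 - t) *\<^sub>R x + t *\<^sub>R y) < (1 - t) * f x + t * f y)"

end

theory Submission
  imports Defs
begin

(* Let X(y) be the point of the simplex whose gradient is y up to a multiple of 1_{nm}. By the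
   tangent inequality it is the unique maximiser of y.W - Phi W over the simplex, so
   Phi*(y) = y.X(y) - Phi(X(y)) is a finite convex function with subgradient X(y); X is continuous
   because its graph is closed with compact range (a limit point on the boundary of the simplex
   would make Phi* non-decreasing in a direction in which it strictly decreases).
   The dual function D(alpha, beta) = alpha.p + beta.q - Phi*(alpha + beta) is invariant under
   adding constants to alpha or beta and decays linearly once they are normalised, so it attains
   its maximum, where the first-order condition says that X(alpha + beta) has marginals p and q.
   The gradient there is alpha_i + beta_j up to a constant, hence orthogonal to differences of
   couplings, and the tangent inequality makes X(alpha + beta) a minimiser; strict convexity gives
   uniqueness. Conversely, at any minimiser the gradient is orthogonal to every perturbation with
   zero margins, which forces it to be of the form alpha_i + beta_j. *)

lemma convex_on_has_derivative_above_tangent: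
  fixes f :: "'a::real_normed_vector \<Rightarrow> real"
  assumes conv: "convex_on S f" and x: "x \<in> S" and y: "y \<in> S"
    and deriv: "(f has_derivative f') (at x)"
  shows "f x + f' (y - x) \<le> f y"
proof -
  interpret f': bounded_linear f'
    using deriv by (rule has_derivative_bounded_linear)
  define g where "g t = f (x + t *\<^sub>R (y - x))" for t :: real
  have "((\<lambda>t. x + t *\<^sub>R (y - x)) has_derivative (\<lambda>t. t *\<^sub>R (y - x))) (at 0)"
    by (auto intro!: derivative_eq_intros)
  then have "(g has_derivative (\<lambda>t. f' (t *\<^sub>R (y - x)))) (at 0)"
    unfolding g_def by (rule has_derivative_compose) (simp add: deriv)
  moreover have "(\<lambda>t. f' (t *\<^sub>R (y - x))) = (*) (f' (y - x))"
    by (simp add: fun_eq_iff f'.scaleR)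
  ultimately have "(g has_field_derivative f' (y - x)) (at 0)"
    by (simp add: has_field_derivative_def)
  then have "((\<lambda>t. (g t - g 0) / t) \<longlongrightarrow> f' (y - x)) (at_right 0)"
    by (simp add: has_field_derivative_iff filterlim_at_split)
  moreover have "eventually (\<lambda>t. (g t - g 0) / t \<le> g 1 - g 0) (at_right 0)"
  proof -
    have "(g t - g 0) / t \<le> g 1 - g 0" if t: "0 < t" "t < 1" for t
    proof -
      have "x + t *\<^sub>R (y - x) = (1 - t) *\<^sub>R x + t *\<^sub>R y"
        by (simp add: algebra_simps)
      then have "g t \<le> (1 - t) * g 0 + t * g 1"
        using convex_onD[OF conv, of t x y] t x y by (simp add: g_def)
      then have "g t - g 0 \<le> t * (g 1 - g 0)"
        by (simp add: algebra_simps)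
      then show ?thesis
        using t by (simp add: divide_le_eq mult.commute)
    qed
    then show ?thesis
      using eventually_at_right_real[of 0 1] by (auto elim!: eventually_mono)
  qed
  ultimately have "f' (y - x) \<le> g 1 - g 0"
    by (rule tendsto_upperbound) simp
  then show ?thesis
    by (simp add: g_def)
qed

lemma strict_convex_on_diff_linear:
  fixes f l :: "'a::real_vector \<Rightarrow> real"
  assumes "strict_convex_on S f" and "linear l"
  shows "strict_convex_on S (\<lambda>x. f x - l x)"
  unfolding strict_convex_on_def
proof (intro conjI ballI allI impI)
  fix x y and t :: real
  assume "x \<in> S" "y \<in> S" "x \<noteq> y \<and> 0 < t \<and> t < 1"
  then have "f ((1 - t) *\<^sub>R x + t *\<^sub>R y) < (1 - t) * f x + t * f y"
    using assms(1) unfolding strict_convex_on_def by blast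
  moreover have "l ((1 - t) *\<^sub>R x + t *\<^sub>R y) = (1 - t) * l x + t * l y"
    using assms(2) by (simp add: linear_add linear_scale)
  moreover have "(1 - t) * (f x - l x) + t * (f y - l y) =
      ((1 - t) * f x + t * f y) - ((1 - t) * l x + t * l y)"
    by (simp add: algebra_simps)
  ultimately show "f ((1 - t) *\<^sub>R x + t *\<^sub>R y) - l ((1 - t) *\<^sub>R x + t *\<^sub>R y)
      < (1 - t) * (f x - l x) + t * (f y - l y)"
    by linarith
qed (use assms(1) in \<open>simp add: strict_convex_on_def\<close>)

lemma strict_convex_on_minimizer_unique:
  fixes f :: "'a::real_vector \<Rightarrow> real"
  assumes f: "strict_convex_on S f" and C: "convex C" "C \<subseteq> S"
    and x: "x \<in> C" "\<forall>z\<in>C. f x \<le> f z"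
    and y: "y \<in> C" "\<forall>z\<in>C. f y \<le> f z"
  shows "x = y"
proof (rule ccontr)
  assume "x \<noteq> y"
  define m where "m = (1 - 1/2) *\<^sub>R x + (1/2::real) *\<^sub>R y"
  have "m \<in> C"
    using convexD[OF C(1) x(1) y(1), of "1 - 1/2" "1/2"] by (simp add: m_def)
  then have "f x \<le> f m"
    using x(2) by blast
  moreover have "f m < (f x + f y) / 2"
  proof -
    have "\<forall>t. x \<noteq> y \<and> 0 < t \<and> t < 1 \<longrightarrow>
        f ((1 - t) *\<^sub>R x + t *\<^sub>R y) < (1 - t) * f x + t * f y"
      using f x(1) y(1) C(2) unfolding strict_convex_on_def by blast
    from spec[OF this, of "1/2"] show ?thesis
      using \<open>x \<noteq> y\<close> unfolding m_def by (simp add: add_divide_distrib)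
  qed
  moreover have "f x \<le> f y" "f y \<le> f x"
    using x y by auto
  ultimately show False
    by argo
qed

lemma finite_ex_arg_min: "\<exists>i0. \<forall>i. (f :: 'a::finite \<Rightarrow> real) i0 \<le> f i"
proof -
  have "Min (range f) \<in> range f"
    by (rule Min_in) auto
  then obtain i0 where "Min (range f) = f i0"
    by blast
  then show ?thesis
    using Min_le[of "range f"] by auto
qed

lemma finite_ex_arg_max: "\<exists>i1. \<forall>i. (f :: 'a::finite \<Rightarrow> real) i \<le> f i1"
  using finite_ex_arg_min[of "\<lambda>i. - f i"] by auto

lemma inner_simplex_vec_le:
  fixes a p :: "real^'n"
  assumes p: "p \<in> simplex_vec" and a: "\<And>k. 0 \<le> a$k" "\<And>k. a$k \<le> c" and a0: "a$i0 = 0"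
  shows "a \<bullet> p \<le> c * (1 - p$i0)"
proof -
  have "a \<bullet> p = (\<Sum>k\<in>UNIV. a$k * p$k)"
    by (simp add: inner_vec_def)
  also have "\<dots> \<le> (\<Sum>k\<in>UNIV. c * p$k - (if k = i0 then c * p$k else 0))"
  proof (rule sum_mono)
    fix k
    have "0 \<le> p$k"
      using p by (simp add: simplex_vec_def less_imp_le)
    then show "a$k * p$k \<le> c * p$k - (if k = i0 then c * p$k else 0)"
      using a0 mult_right_mono[OF a(2)] by auto
  qed
  also have "\<dots> = c * (1 - p$i0)"
    using p by (simp add: sum_subtractf sum_distrib_left[symmetric] simplex_vec_def algebra_simps)
  finally show ?thesis .
qed

section \<open>Matrices and their margins\<close>

definition mat_unit :: "'n \<Rightarrow> 'm \<Rightarrow> real^'m^'n" where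
  "mat_unit a b = (\<chi> i j. if i = a \<and> j = b then 1 else 0)"

definition outer_sum :: "real^'n \<Rightarrow> real^'m \<Rightarrow> real^'m^'n" where
  "outer_sum \<alpha> \<beta> = (\<chi> i j. \<alpha>$i + \<beta>$j)"

definition zero_margins :: "real^'m^'n \<Rightarrow> bool" where
  "zero_margins H \<longleftrightarrow> (\<forall>i. (\<Sum>j\<in>UNIV. H$i$j) = 0) \<and> (\<forall>j. (\<Sum>i\<in>UNIV. H$i$j) = 0)"

lemma inner_mat_eq_sum: "(Y::real^'m^'n) \<bullet> W = (\<Sum>i\<in>UNIV. \<Sum>j\<in>UNIV. Y$i$j * W$i$j)"
  by (simp add: inner_vec_def)

lemma inner_mat_unit: "(Y::real^'m^'n) \<bullet> mat_unit a b = Y$a$b"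
proof -
  have "Y \<bullet> mat_unit a b = (\<Sum>i\<in>UNIV. \<Sum>j\<in>UNIV. if i = a \<and> j = b then Y$a$b else 0)"
    by (simp add: inner_mat_eq_sum mat_unit_def if_distrib cong: if_cong)
  also have "\<dots> = (\<Sum>i\<in>UNIV. if i = a then Y$a$b else 0)"
    by (intro sum.cong refl) auto
  finally show ?thesis
    by simp
qed

lemma inner_ones_mat: "ones_mat \<bullet> (W::real^'m^'n) = (\<Sum>i\<in>UNIV. \<Sum>j\<in>UNIV. W$i$j)"
  by (simp add: inner_mat_eq_sum ones_mat_def)

lemma inner_outer_sum: "outer_sum \<alpha> \<beta> \<bullet> (W::real^'m^'n) =
   (\<Sum>i\<in>UNIV. \<alpha>$i * (\<Sum>j\<in>UNIV. W$i$j)) + (\<Sum>j\<in>UNIV. \<beta>$j * (\<Sum>i\<in>UNIV. W$i$j))"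
proof -
  have "outer_sum \<alpha> \<beta> \<bullet> W =
      (\<Sum>i\<in>UNIV. \<Sum>j\<in>UNIV. \<alpha>$i * W$i$j) + (\<Sum>i\<in>UNIV. \<Sum>j\<in>UNIV. \<beta>$j * W$i$j)"
    by (simp add: inner_mat_eq_sum outer_sum_def distrib_right sum.distrib)
  also have "(\<Sum>i\<in>UNIV. \<Sum>j\<in>UNIV. \<beta>$j * W$i$j) = (\<Sum>j\<in>UNIV. \<Sum>i\<in>UNIV. \<beta>$j * W$i$j)"
    by (rule sum.swap)
  finally show ?thesis
    by (simp add: sum_distrib_left)
qed

lemma outer_sum_add_const_left: "outer_sum (\<alpha> + vec c) \<beta> = outer_sum \<alpha> \<beta> + c *\<^sub>R ones_mat"
  by (simp add: outer_sum_def ones_mat_def vec_eq_iff)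

lemma outer_sum_add_const_right: "outer_sum \<alpha> (\<beta> + vec c) = outer_sum \<alpha> \<beta> + c *\<^sub>R ones_mat"
  by (simp add: outer_sum_def ones_mat_def vec_eq_iff)

lemma outer_sum_add_scaleR:
  "outer_sum (\<alpha> + t *\<^sub>R u) (\<beta> + t *\<^sub>R v) = outer_sum \<alpha> \<beta> + t *\<^sub>R outer_sum u v"
  by (simp add: outer_sum_def vec_eq_iff algebra_simps)

lemma outer_sum_uminus: "outer_sum (- u) (- v) = - outer_sum u v"
  by (simp add: outer_sum_def vec_eq_iff)

lemma continuous_on_outer_sum:
  "continuous_on UNIV (\<lambda>x::(real^'n) \<times> (real^'m). outer_sum (fst x) (snd x))"
  unfolding outer_sum_def by (intro continuous_intros)

lemma sum_mat_unit_row: "(\<Sum>l\<in>UNIV. mat_unit a b $ k $ l) = (if k = a then 1 else 0)"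
  by (cases "k = a") (simp_all add: mat_unit_def)

lemma sum_mat_unit_col: "(\<Sum>k\<in>UNIV. mat_unit a b $ k $ l) = (if l = b then 1 else 0)"
  by (cases "l = b") (simp_all add: mat_unit_def)

lemma sum_axis_mult: "(\<Sum>k\<in>UNIV. axis i (1::real) $ k * f k) = f i"
proof -
  have "(\<Sum>k\<in>UNIV. axis i (1::real) $ k * f k) = (\<Sum>k\<in>UNIV. if k = i then f k else 0)"
    by (intro sum.cong) (auto simp: axis_def)
  then show ?thesis
    by simp
qed

lemma orthogonal_zero_margins_imp_outer_sum:
  fixes Y :: "real^'m^'n"
  assumes orth: "\<And>H. zero_margins H \<Longrightarrow> Y \<bullet> H = 0"
  shows "\<exists>\<alpha> \<beta>. \<forall>i j. Y $ i $ j = \<alpha> $ i + \<beta> $ j"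
proof -
  \<comment> \<open>Any pivot row \<open>i0\<close> and column \<open>j0\<close> will do.\<close>
  fix i0 :: 'n and j0 :: 'm
  have "Y$i$j = (\<chi> i. Y$i$j0)$i + (\<chi> j. Y$i0$j - Y$i0$j0)$j" for i j
  proof -
    define H where "H = mat_unit i j - mat_unit i j0 - mat_unit i0 j + mat_unit i0 j0"
    have "zero_margins H"
      by (simp add: zero_margins_def H_def sum.distrib sum_subtractf sum_mat_unit_row sum_mat_unit_col)
    then have "Y \<bullet> H = 0"
      by (rule orth)
    then show ?thesis
      by (simp add: H_def inner_diff_right inner_add_right inner_mat_unit)
  qed
  then show ?thesis
    by blast
qed

lemma inner_vec_simplex_vec: "p \<in> simplex_vec \<Longrightarrow> vec c \<bullet> p = c"
  by (simp add: inner_vec_def simplex_vec_def sum_distrib_left[symmetric])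

lemma simplex_vec_entry_le_one:
  assumes "p \<in> simplex_vec"
  shows "p$i \<le> 1"
proof -
  have "p$i \<le> (\<Sum>k\<in>UNIV. p$k)"
    using assms by (intro member_le_sum) (auto simp: simplex_vec_def less_imp_le)
  then show ?thesis
    using assms by (simp add: simplex_vec_def)
qed

lemma simplex_mat_subset_pos_mats: "simplex_mat \<subseteq> pos_mats"
  by (simp add: simplex_mat_def)

lemma simplex_mat_entry_pos: "W \<in> simplex_mat \<Longrightarrow> 0 < W$i$j"
  by (simp add: simplex_mat_def pos_mats_def)

lemma inner_ones_mat_simplex_mat: "W \<in> simplex_mat \<Longrightarrow> ones_mat \<bullet> W = 1"
  by (simp add: simplex_mat_def inner_ones_mat)

lemma simplex_mat_entry_le_one:
  assumes "W \<in> simplex_mat"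
  shows "W$i$j \<le> 1"
proof -
  have nonneg: "0 \<le> W$k$l" for k l
    using simplex_mat_entry_pos[OF assms] less_imp_le by blast
  have "W$i$j \<le> (\<Sum>l\<in>UNIV. W$i$l)"
    using nonneg by (intro member_le_sum) auto
  also have "\<dots> \<le> (\<Sum>k\<in>UNIV. \<Sum>l\<in>UNIV. W$k$l)"
    using nonneg by (intro member_le_sum sum_nonneg) auto
  finally show ?thesis
    using assms by (simp add: simplex_mat_def)
qed

lemma simplex_mat_subset_cbox: "simplex_mat \<subseteq> cbox 0 1"
proof
  fix W :: "real^'m^'n"
  assume "W \<in> simplex_mat"
  then show "W \<in> cbox 0 1"
    by (simp add: cbox_interval less_eq_vec_def less_imp_le simplex_mat_entry_pos
        simplex_mat_entry_le_one)
qed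

lemma open_pos_mats: "open pos_mats"
proof -
  have "pos_mats = (\<Inter>i\<in>UNIV. \<Inter>j\<in>UNIV. {A::real^'m^'n. 0 < A$i$j})"
    by (auto simp: pos_mats_def)
  also have "open \<dots>"
    by (intro open_INT ballI open_Collect_less continuous_intros) simp_all
  finally show ?thesis .
qed

lemma couplings_subset_simplex_mat: "couplings p q \<subseteq> simplex_mat"
  by (auto simp: couplings_def)

lemma convex_couplings:
  fixes p :: "real^'n" and q :: "real^'m"
  shows "convex (couplings p q)"
proof (rule convexI)
  fix P Q :: "real^'m^'n" and u v :: real
  assume P: "P \<in> couplings p q" and Q: "Q \<in> couplings p q" and uv: "0 \<le> u" "0 \<le> v" "u + v = 1"
  have "0 < u * x + v * y" if "0 < x" "0 < y" for x y :: real
    using uv that by (cases "u = 0") (auto intro: add_pos_nonneg)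
  then show "u *\<^sub>R P + v *\<^sub>R Q \<in> couplings p q"
    using P Q uv
    by (auto simp: couplings_def simplex_mat_def pos_mats_def sum.distrib
        sum_distrib_left[symmetric] distrib_right[symmetric])
qed

lemma inner_outer_sum_couplings: "Q \<in> couplings p q \<Longrightarrow> outer_sum a b \<bullet> Q = a \<bullet> p + b \<bullet> q"
  unfolding inner_outer_sum by (simp add: couplings_def inner_vec_def)

lemma couplings_add_zero_margins:
  assumes "P \<in> couplings p q" and "zero_margins H" and "P + t *\<^sub>R H \<in> pos_mats"
  shows "P + t *\<^sub>R H \<in> couplings p q"
proof -
  have "(\<Sum>i\<in>UNIV. \<Sum>j\<in>UNIV. (P + t *\<^sub>R H)$i$j) = (\<Sum>i\<in>UNIV. \<Sum>j\<in>UNIV. P$i$j)"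
    using assms(2) by (simp add: zero_margins_def sum.distrib sum_distrib_left[symmetric])
  moreover have "(\<Sum>i\<in>UNIV. p$i) = 1"
    using assms(1) by (auto simp: couplings_def simplex_mat_def)
  ultimately show ?thesis
    using assms by (simp add: couplings_def simplex_mat_def zero_margins_def sum.distrib
        sum_distrib_left[symmetric])
qed

section \<open>Inverting the gradient\<close>

locale simplex_potential =
  fixes \<Phi> :: "real^'m^'n \<Rightarrow> real" and S :: "real^'m^'n \<Rightarrow> real^'m^'n"
  assumes has_derivative_\<Phi>: "\<And>A. A \<in> pos_mats \<Longrightarrow> (\<Phi> has_derivative (\<lambda>H. S A \<bullet> H)) (at A)"
    and convex_on_\<Phi>: "convex_on pos_mats \<Phi>"
    and strict_convex_on_\<Phi>: "strict_convex_on simplex_mat \<Phi>"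
    and gradient_onto: "\<And>y. \<exists>P\<in>simplex_mat. \<exists>c. S P = y + c *\<^sub>R ones_mat"
begin

lemma above_tangent:
  assumes "A \<in> pos_mats" and "B \<in> pos_mats"
  shows "\<Phi> A + S A \<bullet> (B - A) \<le> \<Phi> B"
  using convex_on_has_derivative_above_tangent[OF convex_on_\<Phi> assms has_derivative_\<Phi>[OF assms(1)]] .

definition grad_inv :: "real^'m^'n \<Rightarrow> real^'m^'n" where
  "grad_inv y = (SOME P. P \<in> simplex_mat \<and> (\<exists>c. S P = y + c *\<^sub>R ones_mat))"

lemma grad_inv_in_simplex_mat: "grad_inv y \<in> simplex_mat"
  and grad_inv_gradient: "\<exists>c. S (grad_inv y) = y + c *\<^sub>R ones_mat"
  using someI_ex[of "\<lambda>P. P \<in> simplex_mat \<and> (\<exists>c. S P = y + c *\<^sub>R ones_mat)"] gradient_onto[of y]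
  unfolding grad_inv_def by auto

lemma grad_inv_maximizes:
  assumes W: "W \<in> simplex_mat"
  shows "y \<bullet> W - \<Phi> W \<le> y \<bullet> grad_inv y - \<Phi> (grad_inv y)"
proof -
  obtain c where c: "S (grad_inv y) = y + c *\<^sub>R ones_mat"
    using grad_inv_gradient by blast
  have X: "grad_inv y \<in> simplex_mat"
    by (rule grad_inv_in_simplex_mat)
  have "\<Phi> (grad_inv y) + S (grad_inv y) \<bullet> (W - grad_inv y) \<le> \<Phi> W"
    using above_tangent W X simplex_mat_subset_pos_mats by blast
  moreover have "S (grad_inv y) \<bullet> (W - grad_inv y) = y \<bullet> (W - grad_inv y)"
    using W X by (simp add: c inner_add_left inner_diff_right inner_ones_mat_simplex_mat)
  ultimately show ?thesis
    by (simp add: inner_diff_right)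
qed

lemma grad_inv_unique:
  assumes M: "M \<in> simplex_mat"
    and max: "\<And>W. W \<in> simplex_mat \<Longrightarrow> y \<bullet> W - \<Phi> W \<le> y \<bullet> M - \<Phi> M"
  shows "M = grad_inv y"
proof (rule strict_convex_on_minimizer_unique[where f = "\<lambda>W. \<Phi> W - y \<bullet> W"])
  show "strict_convex_on simplex_mat (\<lambda>W. \<Phi> W - y \<bullet> W)"
    by (intro strict_convex_on_diff_linear strict_convex_on_\<Phi> bounded_linear.linear
        bounded_linear_inner_right)
  show "convex (simplex_mat :: (real^'m^'n) set)"
    using strict_convex_on_\<Phi> by (simp add: strict_convex_on_def)
  show "\<forall>W\<in>simplex_mat. \<Phi> M - y \<bullet> M \<le> \<Phi> W - y \<bullet> W"
    using max by fastforce
  show "\<forall>W\<in>simplex_mat. \<Phi> (grad_inv y) - y \<bullet> grad_inv y \<le> \<Phi> W - y \<bullet> W"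
  proof
    fix W :: "real^'m^'n"
    assume "W \<in> simplex_mat"
    from grad_inv_maximizes[OF this, of y] show "\<Phi> (grad_inv y) - y \<bullet> grad_inv y \<le> \<Phi> W - y \<bullet> W"
      by linarith
  qed
qed (use M grad_inv_in_simplex_mat in auto)

lemma grad_inv_of_gradient:
  assumes X: "X \<in> simplex_mat"
  shows "grad_inv (S X) = X"
proof -
  have "S X \<bullet> W - \<Phi> W \<le> S X \<bullet> X - \<Phi> X" if W: "W \<in> simplex_mat" for W
  proof -
    have "\<Phi> X + S X \<bullet> (W - X) \<le> \<Phi> W"
      using above_tangent X W simplex_mat_subset_pos_mats by blast
    then show ?thesis
      by (simp add: inner_diff_right)
  qed
  then show ?thesis
    using grad_inv_unique X by metis
qed

definition conjugate :: "real^'m^'n \<Rightarrow> real" where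
  "conjugate y = y \<bullet> grad_inv y - \<Phi> (grad_inv y)"

lemma conjugate_ge: "W \<in> simplex_mat \<Longrightarrow> y \<bullet> W - \<Phi> W \<le> conjugate y"
  unfolding conjugate_def by (rule grad_inv_maximizes)

lemma conjugate_subgradient: "conjugate y + (z - y) \<bullet> grad_inv y \<le> conjugate z"
  using conjugate_ge[OF grad_inv_in_simplex_mat[of y], of z]
  by (simp add: conjugate_def inner_diff_left)

lemma conjugate_add_const: "conjugate (y + c *\<^sub>R ones_mat) = conjugate y + c"
  using conjugate_subgradient[of y "y + c *\<^sub>R ones_mat"] conjugate_subgradient[of "y + c *\<^sub>R ones_mat" y]
  by (simp add: inner_ones_mat_simplex_mat grad_inv_in_simplex_mat)

lemma conjugate_diff_mat_unit_less: "conjugate (y - mat_unit i j) < conjugate y"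
proof -
  define Z where "Z = grad_inv (y - mat_unit i j)"
  have Z: "Z \<in> simplex_mat"
    by (simp add: Z_def grad_inv_in_simplex_mat)
  have "conjugate (y - mat_unit i j) = y \<bullet> Z - \<Phi> Z - Z$i$j"
    by (simp add: conjugate_def Z_def[symmetric] inner_diff_left inner_commute[of "mat_unit i j"]
        inner_mat_unit)
  also have "\<dots> < y \<bullet> Z - \<Phi> Z"
    using simplex_mat_entry_pos[OF Z] by simp
  also have "\<dots> \<le> conjugate y"
    using conjugate_ge[OF Z] .
  finally show ?thesis .
qed

lemma convex_on_conjugate: "convex_on UNIV conjugate"
proof (rule convex_onI)
  fix t :: real and x y :: "real^'m^'n"
  assume t: "0 < t" "t < 1"
  define Z where "Z = grad_inv ((1 - t) *\<^sub>R x + t *\<^sub>R y)"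
  have Z: "Z \<in> simplex_mat"
    by (simp add: Z_def grad_inv_in_simplex_mat)
  have "conjugate ((1 - t) *\<^sub>R x + t *\<^sub>R y) = (1 - t) * (x \<bullet> Z - \<Phi> Z) + t * (y \<bullet> Z - \<Phi> Z)"
    unfolding conjugate_def Z_def[symmetric] by (simp add: algebra_simps)
  also have "\<dots> \<le> (1 - t) * conjugate x + t * conjugate y"
    using conjugate_ge[OF Z, of x] conjugate_ge[OF Z, of y] t
    by (intro add_mono mult_left_mono) auto
  finally show "conjugate ((1 - t) *\<^sub>R x + t *\<^sub>R y) \<le> (1 - t) * conjugate x + t * conjugate y" .
qed simp

lemma continuous_on_conjugate: "continuous_on UNIV conjugate"
  using convex_on_continuous[OF open_UNIV convex_on_conjugate] .

lemma grad_inv_limit: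
  assumes yk: "yk \<longlonglongrightarrow> y" and Xk: "(\<lambda>k. grad_inv (yk k)) \<longlonglongrightarrow> X"
  shows "X = grad_inv y"
proof -
  have nonneg: "0 \<le> X$i$j" for i j
    by (rule tendsto_lowerbound[OF tendsto_vec_nth[OF tendsto_vec_nth[OF Xk]]])
      (simp_all add: less_imp_le simplex_mat_entry_pos grad_inv_in_simplex_mat)
  have "(\<lambda>k. ones_mat \<bullet> grad_inv (yk k)) \<longlonglongrightarrow> ones_mat \<bullet> X"
    by (intro tendsto_intros Xk)
  then have total: "ones_mat \<bullet> X = 1"
    by (simp add: inner_ones_mat_simplex_mat grad_inv_in_simplex_mat LIMSEQ_const_iff)
  have subgradient: "conjugate y + (z - y) \<bullet> X \<le> conjugate z" for z
  proof (rule tendsto_upperbound)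
    show "(\<lambda>k. conjugate (yk k) + (z - yk k) \<bullet> grad_inv (yk k)) \<longlonglongrightarrow> conjugate y + (z - y) \<bullet> X"
      using continuous_on_conjugate yk Xk
      by (intro tendsto_intros) (auto intro: continuous_on_tendsto_compose[of UNIV conjugate])
  qed (simp_all add: conjugate_subgradient)
  have pos: "0 < X$i$j" for i j
  \<comment> \<open>Otherwise lowering \<open>y\<close> at \<open>(i, j)\<close> could not decrease the conjugate.\<close>
  proof (rule ccontr)
    assume "\<not> 0 < X$i$j"
    then have "X$i$j = 0"
      using nonneg[of i j] by simp
    then have "conjugate y \<le> conjugate (y - mat_unit i j)"
      using subgradient[of "y - mat_unit i j"] by (simp add: inner_commute inner_mat_unit)
    then show False
      using conjugate_diff_mat_unit_less[of y i j] by simp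
  qed
  have X: "X \<in> simplex_mat"
    using pos total by (simp add: simplex_mat_def pos_mats_def inner_ones_mat)
  show ?thesis
  proof (rule grad_inv_unique[OF X])
    fix W :: "real^'m^'n"
    assume "W \<in> simplex_mat"
    then have "y \<bullet> W - \<Phi> W \<le> conjugate y"
      by (rule conjugate_ge)
    also have "\<dots> \<le> conjugate (S X) - (S X - y) \<bullet> X"
      using subgradient[of "S X"] by simp
    also have "\<dots> = y \<bullet> X - \<Phi> X"
      by (simp add: conjugate_def grad_inv_of_gradient[OF X] inner_diff_left)
    finally show "y \<bullet> W - \<Phi> W \<le> y \<bullet> X - \<Phi> X" .
  qed
qed

lemma continuous_on_grad_inv: "continuous_on UNIV grad_inv"
proof (rule continuous_from_closed_graph)
  show "compact (cbox (0::real^'m^'n) 1)"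
    by (rule compact_cbox)
  show "grad_inv \<in> UNIV \<rightarrow> cbox 0 1"
    using simplex_mat_subset_cbox grad_inv_in_simplex_mat by blast
  show "closed (range (\<lambda>y. (y, grad_inv y)))"
    unfolding closed_sequential_limits
  proof (intro allI impI, elim conjE)
    fix s and l :: "(real^'m^'n) \<times> (real^'m^'n)"
    assume s: "\<forall>n. s n \<in> range (\<lambda>y. (y, grad_inv y))" and lim: "s \<longlonglongrightarrow> l"
    have "snd (s n) = grad_inv (fst (s n))" for n
    proof -
      obtain y where "s n = (y, grad_inv y)"
        using s by blast
      then show ?thesis
        by simp
    qed
    then have "snd l = grad_inv (fst l)"
      using grad_inv_limit[OF tendsto_fst[OF lim]] tendsto_snd[OF lim] by simp
    then show "l \<in> range (\<lambda>y. (y, grad_inv y))"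
      by (intro image_eqI[of _ _ "fst l"]) (simp_all add: prod_eq_iff)
  qed
qed

section \<open>The dual problem\<close>

definition dual :: "real^'n \<Rightarrow> real^'m \<Rightarrow> real^'n \<Rightarrow> real^'m \<Rightarrow> real" where
  "dual p q a b = a \<bullet> p + b \<bullet> q - conjugate (outer_sum a b)"

lemma dual_add_const:
  assumes "p \<in> simplex_vec" and "q \<in> simplex_vec"
  shows "dual p q (a + vec c) (b + vec d) = dual p q a b"
  using assms
  by (simp add: dual_def outer_sum_add_const_left outer_sum_add_const_right conjugate_add_const
      inner_add_left inner_vec_simplex_vec)

lemma continuous_on_dual: "continuous_on UNIV (\<lambda>x. dual p q (fst x) (snd x))"
  unfolding dual_def
  by (intro continuous_intros continuous_on_compose2[OF continuous_on_conjugate continuous_on_outer_sum])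
    auto

lemma conjugate_lower_bound:
  assumes \<delta>: "0 < \<delta>" "\<delta> \<le> 1"
  obtains C where "\<And>y i j. (\<forall>k l. 0 \<le> y$k$l) \<Longrightarrow> (1 - \<delta>) * y$i$j - C \<le> conjugate y"
proof -
  define U where "U = grad_inv 0"
  have U: "U \<in> simplex_mat"
    by (simp add: U_def grad_inv_in_simplex_mat)
  define W where "W i j = (1 - \<delta>) *\<^sub>R mat_unit i j + \<delta> *\<^sub>R U" for i j
  have W: "W i j \<in> simplex_mat" for i j
  proof -
    have "ones_mat \<bullet> W i j = 1"
      using U by (simp add: W_def inner_add_right inner_mat_unit inner_ones_mat_simplex_mat)
        (simp add: ones_mat_def)
    moreover have "0 < W i j $ k $ l" for k l
      using \<delta> simplex_mat_entry_pos[OF U, of k l] by (simp add: W_def mat_unit_def add_nonneg_pos)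
    ultimately show ?thesis
      by (simp add: simplex_mat_def pos_mats_def inner_ones_mat)
  qed
  obtain x1 where x1: "\<And>x. \<Phi> (W (fst x) (snd x)) \<le> \<Phi> (W (fst x1) (snd x1))"
    using finite_ex_arg_max[of "\<lambda>x::'n \<times> 'm. \<Phi> (W (fst x) (snd x))"] by blast
  show thesis
  proof (rule that)
    fix y :: "real^'m^'n" and i j
    assume y: "\<forall>k l. 0 \<le> y$k$l"
    have "0 \<le> y \<bullet> U"
      using y simplex_mat_entry_pos[OF U]
      by (simp add: inner_mat_eq_sum sum_nonneg less_imp_le)
    then have "(1 - \<delta>) * y$i$j \<le> y \<bullet> W i j"
      using \<delta> by (simp add: W_def inner_add_right inner_mat_unit)
    moreover have "\<Phi> (W i j) \<le> \<Phi> (W (fst x1) (snd x1))"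
      using x1[of "(i, j)"] by simp
    moreover have "y \<bullet> W i j - \<Phi> (W i j) \<le> conjugate y"
      by (rule conjugate_ge[OF W])
    ultimately show "(1 - \<delta>) * y$i$j - \<Phi> (W (fst x1) (snd x1)) \<le> conjugate y"
      by linarith
  qed
qed

lemma dual_coercive:
  assumes p: "p \<in> simplex_vec" and q: "q \<in> simplex_vec"
  obtains \<delta> C where "0 < \<delta>"
    and "\<And>a b i0 j0 i j. \<forall>k. 0 \<le> a$k \<Longrightarrow> a$i0 = 0 \<Longrightarrow> \<forall>l. 0 \<le> b$l \<Longrightarrow> b$j0 = 0 \<Longrightarrow>
           dual p q a b \<le> C - \<delta> * (a$i + b$j)"
proof -
  obtain ip where ip: "\<And>k. p$ip \<le> p$k"
    using finite_ex_arg_min[of "(($) p)"] by blast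
  obtain iq where iq: "\<And>l. q$iq \<le> q$l"
    using finite_ex_arg_min[of "(($) q)"] by blast
  define \<delta> where "\<delta> = min (p$ip) (q$iq) / 2"
  have \<delta>: "0 < \<delta>" "\<And>k. 2 * \<delta> \<le> p$k" "\<And>l. 2 * \<delta> \<le> q$l"
    using p q ip iq by (simp_all add: \<delta>_def simplex_vec_def min_le_iff_disj)
  have "\<delta> \<le> 1"
    using \<delta>(2)[of ip] simplex_vec_entry_le_one[OF p, of ip] by linarith
  then obtain C where C: "\<And>y i j. \<forall>k l. 0 \<le> y$k$l \<Longrightarrow> (1 - \<delta>) * y$i$j - C \<le> conjugate y"
    using conjugate_lower_bound \<delta>(1) by blast
  show thesis
  proof (rule that[OF \<delta>(1)])
    fix a :: "real^'n" and b :: "real^'m" and i0 j0 i j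
    assume a: "\<forall>k. 0 \<le> a$k" "a$i0 = 0" and b: "\<forall>l. 0 \<le> b$l" "b$j0 = 0"
    obtain i1 where i1: "\<And>k. a$k \<le> a$i1"
      using finite_ex_arg_max[of "(($) a)"] by blast
    obtain j1 where j1: "\<And>l. b$l \<le> b$j1"
      using finite_ex_arg_max[of "(($) b)"] by blast
    have "a \<bullet> p \<le> a$i1 * (1 - p$i0)"
      using inner_simplex_vec_le[OF p] a i1 by blast
    also have "\<dots> \<le> a$i1 * (1 - 2 * \<delta>)"
      using a(1) \<delta>(2)[of i0] by (intro mult_left_mono) auto
    finally have ap: "a \<bullet> p \<le> a$i1 - 2 * (\<delta> * a$i1)"
      by (simp add: algebra_simps)
    have "b \<bullet> q \<le> b$j1 * (1 - q$j0)"
      using inner_simplex_vec_le[OF q] b j1 by blast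
    also have "\<dots> \<le> b$j1 * (1 - 2 * \<delta>)"
      using b(1) \<delta>(3)[of j0] by (intro mult_left_mono) auto
    finally have bq: "b \<bullet> q \<le> b$j1 - 2 * (\<delta> * b$j1)"
      by (simp add: algebra_simps)
    have "(1 - \<delta>) * outer_sum a b $ i1 $ j1 - C \<le> conjugate (outer_sum a b)"
      using a(1) b(1) by (intro C) (simp add: outer_sum_def)
    then have conj: "a$i1 + b$j1 - \<delta> * a$i1 - \<delta> * b$j1 - C \<le> conjugate (outer_sum a b)"
      by (simp add: outer_sum_def algebra_simps)
    have "\<delta> * (a$i + b$j) \<le> \<delta> * (a$i1 + b$j1)"
      using \<delta>(1) i1[of i] j1[of j] by (intro mult_left_mono) auto
    then show "dual p q a b \<le> C - \<delta> * (a$i + b$j)"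
      using ap bq conj by (simp add: dual_def algebra_simps)
  qed
qed

lemma dual_attains_max:
  assumes p: "p \<in> simplex_vec" and q: "q \<in> simplex_vec"
  obtains a b where "\<And>a' b'. dual p q a' b' \<le> dual p q a b"
proof -
  obtain \<delta> C where \<delta>: "0 < \<delta>"
    and coercive: "\<And>a b i0 j0 i j. \<forall>k. 0 \<le> a$k \<Longrightarrow> a$i0 = 0 \<Longrightarrow> \<forall>l. 0 \<le> b$l \<Longrightarrow> b$j0 = 0 \<Longrightarrow>
      dual p q a b \<le> C - \<delta> * (a$i + b$j)"
    by (rule dual_coercive[OF p q]) (rule that)
  define R where "R = max 0 ((C - dual p q 0 0) / \<delta>)"
  define K where "K = cbox (0::real^'n) (vec R) \<times> cbox (0::real^'m) (vec R)"
  have "(0, 0) \<in> K"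
    by (simp add: K_def R_def mem_box_cart)
  then have "K \<noteq> {}"
    by blast
  moreover have "compact K"
    unfolding K_def by (intro compact_Times compact_cbox)
  moreover have "continuous_on K (\<lambda>z. dual p q (fst z) (snd z))"
    by (rule continuous_on_subset[OF continuous_on_dual]) simp
  ultimately obtain x where x: "\<And>z. z \<in> K \<Longrightarrow> dual p q (fst z) (snd z) \<le> dual p q (fst x) (snd x)"
    using continuous_attains_sup[of K "\<lambda>z. dual p q (fst z) (snd z)"] by blast
  show thesis
  proof (rule that)
    fix a :: "real^'n" and b :: "real^'m"
    obtain i0 where i0: "\<And>i. a$i0 \<le> a$i"
      using finite_ex_arg_min[of "(($) a)"] by blast
    obtain j0 where j0: "\<And>j. b$j0 \<le> b$j"
      using finite_ex_arg_min[of "(($) b)"] by blast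
    define a' where "a' = a + vec (- a$i0)"
    define b' where "b' = b + vec (- b$j0)"
    have a': "\<forall>k. 0 \<le> a'$k" "a'$i0 = 0" and b': "\<forall>l. 0 \<le> b'$l" "b'$j0 = 0"
      using i0 j0 by (simp_all add: a'_def b'_def)
    have "dual p q a b = dual p q a' b'"
      by (simp add: a'_def b'_def dual_add_const[OF p q])
    also have "\<dots> \<le> dual p q (fst x) (snd x)"
    proof (cases "(a', b') \<in> K")
      case True
      then show ?thesis
        using x by fastforce
    next
      case False
      then consider (row) i where "R < a'$i" | (col) j where "R < b'$j"
        using a'(1) b'(1) unfolding K_def mem_Times_iff mem_box_cart by (auto simp: not_le)
      then obtain i j where "R < a'$i + b'$j"
      proof cases
        case (row i)
        then show thesis
          using that[of i j0] b'(2) by simp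
      next
        case (col j)
        then show thesis
          using that[of i0 j] a'(2) by simp
      qed
      then have "C - \<delta> * (a'$i + b'$j) < C - \<delta> * R"
        using \<delta> by simp
      also have "\<dots> \<le> dual p q 0 0"
      proof -
        have "(C - dual p q 0 0) / \<delta> \<le> R"
          by (simp add: R_def)
        then show ?thesis
          using \<delta> by (simp add: pos_divide_le_eq mult.commute)
      qed
      also have "\<dots> \<le> dual p q (fst x) (snd x)"
        using x[OF \<open>(0, 0) \<in> K\<close>] by simp
      finally show ?thesis
        using coercive[OF a' b', of i j] by linarith
    qed
    finally show "dual p q a b \<le> dual p q (fst x) (snd x)" .
  qed
qed

lemma dual_max_imp_coupling:
  assumes p: "p \<in> simplex_vec" and q: "q \<in> simplex_vec"
    and max: "\<And>a' b'. dual p q a' b' \<le> dual p q a b"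
  shows "grad_inv (outer_sum a b) \<in> couplings p q"
proof -
  define y where "y = outer_sum a b"
  have ineq: "u \<bullet> p + v \<bullet> q \<le> outer_sum u v \<bullet> grad_inv y" for u v
  \<comment> \<open>One-sided derivative of the dual along a ray, controlled by \<open>grad_inv\<close> on the ray.\<close>
  proof -
    define w where "w = outer_sum u v"
    have ray: "u \<bullet> p + v \<bullet> q \<le> w \<bullet> grad_inv (y + t *\<^sub>R w)" if t: "0 < t" for t
    proof -
      have "t * (u \<bullet> p + v \<bullet> q) \<le> conjugate (y + t *\<^sub>R w) - conjugate y"
        using max[of "a + t *\<^sub>R u" "b + t *\<^sub>R v"]
        by (simp add: dual_def outer_sum_add_scaleR y_def w_def algebra_simps)
      also have "\<dots> \<le> t * (w \<bullet> grad_inv (y + t *\<^sub>R w))"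
        using conjugate_subgradient[of "y + t *\<^sub>R w" y] by (simp add: inner_diff_left)
      finally show ?thesis
        using t by simp
    qed
    have ev: "eventually (\<lambda>t. u \<bullet> p + v \<bullet> q \<le> w \<bullet> grad_inv (y + t *\<^sub>R w)) (at_right 0)"
      using eventually_at_right_less[of "0::real"] by (rule eventually_mono) (rule ray)
    have "continuous_on UNIV (\<lambda>t::real. w \<bullet> grad_inv (y + t *\<^sub>R w))"
      by (intro continuous_intros continuous_on_compose2[OF continuous_on_grad_inv]) auto
    then have "isCont (\<lambda>t. w \<bullet> grad_inv (y + t *\<^sub>R w)) 0"
      by (simp add: continuous_on_eq_continuous_at)
    then have "((\<lambda>t. w \<bullet> grad_inv (y + t *\<^sub>R w)) \<longlongrightarrow> w \<bullet> grad_inv (y + 0 *\<^sub>R w)) (at 0)"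
      by (rule isContD)
    then have lim: "((\<lambda>t. w \<bullet> grad_inv (y + t *\<^sub>R w)) \<longlongrightarrow> w \<bullet> grad_inv y) (at_right 0)"
      by (simp add: filterlim_at_split)
    show ?thesis
      using tendsto_lowerbound[OF lim ev] by (simp add: w_def)
  qed
  have margins: "outer_sum u v \<bullet> grad_inv y = u \<bullet> p + v \<bullet> q" for u v
    using ineq[of u v] ineq[of "- u" "- v"] by (simp add: outer_sum_uminus)
  have "(\<Sum>j\<in>UNIV. grad_inv y $ i $ j) = p$i" for i
    using margins[of "axis i 1" 0] by (simp add: inner_outer_sum inner_axis' sum_axis_mult)
  moreover have "(\<Sum>i\<in>UNIV. grad_inv y $ i $ j) = q$j" for j
    using margins[of 0 "axis j 1"] by (simp add: inner_outer_sum inner_axis' sum_axis_mult)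
  ultimately show ?thesis
    using grad_inv_in_simplex_mat by (simp add: couplings_def y_def)
qed

lemma ex_outer_sum_coupling:
  assumes "p \<in> simplex_vec" and "q \<in> simplex_vec"
  shows "\<exists>a b. grad_inv (outer_sum a b) \<in> couplings p q"
proof -
  obtain a b where "\<And>a' b'. dual p q a' b' \<le> dual p q a b"
    by (rule dual_attains_max[OF assms]) (rule that)
  then show ?thesis
    using dual_max_imp_coupling[OF assms] by blast
qed

section \<open>Minimisers over the couplings\<close>

lemma outer_sum_gradient_imp_minimizer:
  assumes P: "P \<in> couplings p q" and SP: "S P = outer_sum a b + c *\<^sub>R ones_mat"
    and Q: "Q \<in> couplings p q"
  shows "\<Phi> P \<le> \<Phi> Q"
proof -
  have "P \<in> pos_mats" "Q \<in> pos_mats"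
    using P Q couplings_subset_simplex_mat simplex_mat_subset_pos_mats by blast+
  then have "\<Phi> P + S P \<bullet> (Q - P) \<le> \<Phi> Q"
    by (rule above_tangent)
  moreover have "P \<in> simplex_mat" "Q \<in> simplex_mat"
    using P Q couplings_subset_simplex_mat by blast+
  then have "S P \<bullet> (Q - P) = 0"
    using P Q by (simp add: SP inner_diff_right inner_add_left inner_outer_sum_couplings
        inner_ones_mat_simplex_mat)
  ultimately show ?thesis
    by simp
qed

lemma minimizer_orthogonal_zero_margins:
  assumes P: "P \<in> couplings p q" and min: "\<forall>Q\<in>couplings p q. \<Phi> P \<le> \<Phi> Q"
    and H: "zero_margins H"
  shows "S P \<bullet> H = 0"
proof -
  have P_pos: "P \<in> pos_mats"
    using P couplings_subset_simplex_mat simplex_mat_subset_pos_mats by blast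
  have "((\<lambda>t::real. P + t *\<^sub>R H) \<longlongrightarrow> P + 0 *\<^sub>R H) (at 0)"
    by (intro tendsto_intros)
  then have "((\<lambda>t::real. P + t *\<^sub>R H) \<longlongrightarrow> P) (at 0)"
    by simp
  then have "eventually (\<lambda>t. P + t *\<^sub>R H \<in> pos_mats) (at 0)"
    using open_pos_mats P_pos by (rule topological_tendstoD)
  then have local_min: "eventually (\<lambda>t. \<Phi> (P + 0 *\<^sub>R H) \<le> \<Phi> (P + t *\<^sub>R H)) (at 0)"
  proof (rule eventually_mono)
    fix t :: real
    assume "P + t *\<^sub>R H \<in> pos_mats"
    then have "P + t *\<^sub>R H \<in> couplings p q"
      by (rule couplings_add_zero_margins[OF P H])
    then show "\<Phi> (P + 0 *\<^sub>R H) \<le> \<Phi> (P + t *\<^sub>R H)"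
      using min by simp
  qed
  have "((\<lambda>t. P + t *\<^sub>R H) has_derivative (\<lambda>t. t *\<^sub>R H)) (at 0)"
    by (auto intro!: derivative_eq_intros)
  moreover have "(\<Phi> has_derivative (\<lambda>K. S P \<bullet> K)) (at (P + 0 *\<^sub>R H))"
    using has_derivative_\<Phi>[OF P_pos] by simp
  ultimately have "((\<lambda>t. \<Phi> (P + t *\<^sub>R H)) has_derivative (\<lambda>t. S P \<bullet> (t *\<^sub>R H))) (at 0)"
    by (rule has_derivative_compose)
  from has_derivative_local_min[OF this local_min]
  have "(\<lambda>t. S P \<bullet> (t *\<^sub>R H)) = (\<lambda>t. 0)" .
  from fun_cong[OF this, of 1] show ?thesis
    by simp
qed

lemma minimizer_gradient_outer_sum:
  assumes "P \<in> couplings p q" and "\<forall>Q\<in>couplings p q. \<Phi> P \<le> \<Phi> Q"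
  shows "\<exists>\<alpha> \<beta>. \<forall>i j. S P $ i $ j = \<alpha> $ i + \<beta> $ j"
  by (rule orthogonal_zero_margins_imp_outer_sum) (rule minimizer_orthogonal_zero_margins[OF assms])

lemma ex1_minimizer_couplings:
  assumes p: "p \<in> simplex_vec" and q: "q \<in> simplex_vec"
  shows "\<exists>!P. P \<in> couplings p q \<and> (\<forall>Q\<in>couplings p q. \<Phi> P \<le> \<Phi> Q)"
proof -
  obtain a b where P: "grad_inv (outer_sum a b) \<in> couplings p q"
    using ex_outer_sum_coupling[OF p q] by blast
  obtain c where "S (grad_inv (outer_sum a b)) = outer_sum a b + c *\<^sub>R ones_mat"
    using grad_inv_gradient by blast
  from outer_sum_gradient_imp_minimizer[OF P this]
  have min: "\<forall>Q\<in>couplings p q. \<Phi> (grad_inv (outer_sum a b)) \<le> \<Phi> Q"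
    by blast
  have unique: "P' = grad_inv (outer_sum a b)"
    if "P' \<in> couplings p q" and "\<forall>Q\<in>couplings p q. \<Phi> P' \<le> \<Phi> Q" for P'
    using strict_convex_on_minimizer_unique[OF strict_convex_on_\<Phi> convex_couplings
        couplings_subset_simplex_mat that P min] .
  show ?thesis
    by (rule ex1I[where a = "grad_inv (outer_sum a b)"]) (use P min unique in blast)+
qed

end

lemma bij_betw_quot_class_onto:
  assumes "bij_betw (\<lambda>P. quot_class (S P)) A (range quot_class)"
  shows "\<exists>P\<in>A. \<exists>c. S P = y + c *\<^sub>R ones_mat"
proof -
  have "quot_class y \<in> (\<lambda>P. quot_class (S P)) ` A"
    unfolding bij_betw_imp_surj_on[OF assms] by (rule rangeI)
  then obtain P where P: "P \<in> A" "quot_class y = quot_class (S P)"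
    by (rule imageE)
  have "S P \<in> quot_class (S P)"
    unfolding quot_class_def by (auto intro: exI[of _ 0])
  then have "S P \<in> quot_class y"
    using P(2) by simp
  then show ?thesis
    using P(1) unfolding quot_class_def by auto
qed

theorem theorem2:
  fixes \<Phi> :: "real^'m^'n \<Rightarrow> real"
    and S :: "real^'m^'n \<Rightarrow> real^'m^'n"
    and p :: "real^'n" and q :: "real^'m"
  assumes grad: "\<And>A. A \<in> pos_mats \<Longrightarrow>
      (\<Phi> has_derivative (\<lambda>H. \<Sum>i\<in>UNIV. \<Sum>j\<in>UNIV. S A $ i $ j * H $ i $ j)) (at A)"
    and conv: "convex_on pos_mats \<Phi>"
    and hom: "\<And>t A. t > 0 \<Longrightarrow> A \<in> pos_mats \<Longrightarrow> \<Phi> (t *\<^sub>R A) = t * \<Phi> A"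
    and strict: "strict_convex_on simplex_mat \<Phi>"
    and bij: "bij_betw (\<lambda>P. quot_class (S P)) simplex_mat (range quot_class)"
    and p: "p \<in> simplex_vec" and q: "q \<in> simplex_vec"
  shows "(\<exists>!P. P \<in> couplings p q \<and> (\<forall>Q\<in>couplings p q. \<Phi> P \<le> \<Phi> Q))
    \<and> (\<forall>P. P \<in> couplings p q \<and> (\<forall>Q\<in>couplings p q. \<Phi> P \<le> \<Phi> Q) \<longrightarrow>
         (\<exists>\<alpha> :: real^'n. \<exists>\<beta> :: real^'m. \<forall>i j. S P $ i $ j = \<alpha> $ i + \<beta> $ j))"
proof -
  interpret simplex_potential \<Phi> S
    using grad conv strict bij_betw_quot_class_onto[OF bij]
    by unfold_locales (simp_all add: inner_mat_eq_sum)
  show ?thesis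
    using ex1_minimizer_couplings[OF p q] minimizer_gradient_outer_sum by blast
qed

end
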